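(* Let $G$ be a finite group and $H$ a normal subgroup of $G$. Then the extended subgroup sum graph $\Gamma^+_{G,H}$ admits a total perfect code if and only if $|G|$ is even and $|H|=2$.
   Context: For a normal subgroup $H$ of a finite group $G$, the extended subgroup sum graph $\Gamma^+_{G,H}$ is the simple undirected graph with vertex set $G$ in which distinct vertices $x,y$ are adjacent if and only if $xy\in H$. A total perfect code in a graph is a set $C$ of vertices such that every vertex of the graph (whether in $C$ or not) has exactly one neighbour in $C$. *)

theory Defs
  imports "HOL-Algebra.Algebra"
begin

definition ext_subgroup_sum_adj :: "('a, 'b) monoid_scheme \<Rightarrow> 'a set \<Rightarrow> 'a \<Rightarrow> 'a \<Rightarrow> bool" where
  "ext_subgroup_sum_adj G H x y \<longleftrightarrow>
     x \<in> carrier G \<and> y \<in> carrier G \<and> x \<noteq> y \<and> x \<otimes>\<^bsub>G\<^esub> y \<in> H"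

definition total_perfect_code :: "'a set \<Rightarrow> ('a \<Rightarrow> 'a \<Rightarrow> bool) \<Rightarrow> 'a set \<Rightarrow> bool" where
  "total_perfect_code V E C \<longleftrightarrow> C \<subseteq> V \<and> (\<forall>v\<in>V. \<exists>!c. c \<in> C \<and> E v c)"

end

theory Submission
  imports Defs
begin

text \<open>The neighbours of v are the elements of the left coset v\<inverse>H other than v itself.
  Restricted to H the graph is therefore complete, and in a complete graph every vertex has
  exactly one neighbour in a total perfect code only if there are exactly two vertices; so
  |H| = 2, and Lagrange gives |G| even.
  Conversely a normal subgroup of order 2 is {1, h} with h a central involution, and inversion
  permutes the cosets {x, xh}. A coset fixed by inversion is the neighbourhood of each of its
  elements apart from that element, so the code takes all of it; any other coset is the whole
  neighbourhood of each element of its inverse coset, so the code takes one of its elements.\<close>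

lemma (in group) ext_subgroup_sum_adj_iff:
  assumes "subgroup H G" and "v \<in> carrier G"
  shows "ext_subgroup_sum_adj G H v c \<longleftrightarrow> c \<in> inv v <# H \<and> c \<noteq> v"
proof
  assume "ext_subgroup_sum_adj G H v c"
  then have c: "c \<in> carrier G" and "v \<otimes> c \<in> H" "v \<noteq> c"
    unfolding ext_subgroup_sum_adj_def by simp_all
  moreover have "c = inv v \<otimes> (v \<otimes> c)"
    using assms(2) c by (simp add: m_assoc[symmetric])
  ultimately show "c \<in> inv v <# H \<and> c \<noteq> v"
    unfolding l_coset_def by blast
next
  assume "c \<in> inv v <# H \<and> c \<noteq> v"
  then obtain k where k: "k \<in> H" "c = inv v \<otimes> k" and "c \<noteq> v"
    unfolding l_coset_def by auto
  have "k \<in> carrier G"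
    using assms(1) k(1) by (rule subgroup.mem_carrier)
  then show "ext_subgroup_sum_adj G H v c"
    unfolding ext_subgroup_sum_adj_def using assms(2) k \<open>c \<noteq> v\<close>
    by (simp add: m_assoc[symmetric])
qed

lemma (in group) card_eq_2_if_total_perfect_code:
  assumes H: "subgroup H G"
    and C: "total_perfect_code (carrier G) (ext_subgroup_sum_adj G H) C"
  shows "card H = 2"
proof -
  have unique_nbr: "\<exists>!c. c \<in> C \<inter> H \<and> c \<noteq> w" if w: "w \<in> H" for w
  proof -
    have wG: "w \<in> carrier G"
      using H w by (rule subgroup.mem_carrier)
    have "inv w <# H = H"
      using wG H subgroup.m_inv_closed[OF H w] by (rule coset_join3[OF inv_closed])
    then have "ext_subgroup_sum_adj G H w c \<longleftrightarrow> c \<in> H \<and> c \<noteq> w" for c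
      using ext_subgroup_sum_adj_iff[OF H wG] by simp
    moreover have "\<exists>!c. c \<in> C \<and> ext_subgroup_sum_adj G H w c"
      using C wG unfolding total_perfect_code_def by simp
    ultimately show ?thesis
      by simp
  qed
  obtain c0 where c0: "c0 \<in> C \<inter> H"
    using unique_nbr[OF subgroup.one_closed[OF H]] by blast
  obtain c1 where c1: "c1 \<in> C \<inter> H" "c1 \<noteq> c0"
    using unique_nbr[of c0] c0 by blast
  have "H \<subseteq> {c0, c1}"
  proof
    fix w assume w: "w \<in> H"
    show "w \<in> {c0, c1}"
    proof (rule ccontr)
      assume "w \<notin> {c0, c1}"
      with unique_nbr[OF w] c0 c1 show False
        by (metis insertCI)
    qed
  qed
  with c0 c1 have "H = {c0, c1}"
    by blast
  with c1(2) show ?thesis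
    by simp
qed

locale central_involution = group G for G (structure) +
  fixes h :: 'a
  assumes h_carrier: "h \<in> carrier G"
    and h_not_one: "h \<noteq> \<one>"
    and h_square: "h \<otimes> h = \<one>"
    and h_central: "x \<in> carrier G \<Longrightarrow> x \<otimes> h = h \<otimes> x"
begin

lemma subgroup_one_h: "subgroup {\<one>, h} G"
  by (rule subgroupI) (use h_carrier h_square in \<open>auto simp: inv_equality\<close>)

lemma l_coset_one_h: "x \<in> carrier G \<Longrightarrow> x <# {\<one>, h} = {x, x \<otimes> h}"
  by (auto simp: l_coset_def)

lemma mult_h_neq: "x \<in> carrier G \<Longrightarrow> x \<otimes> h \<noteq> x"
  using h_carrier h_not_one by simp

lemma mult_h_mult_h: "x \<in> carrier G \<Longrightarrow> x \<otimes> h \<otimes> h = x"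
  using h_carrier h_square by (simp add: m_assoc)

lemma square_mult_h:
  assumes "x \<in> carrier G"
  shows "(x \<otimes> h) \<otimes> (x \<otimes> h) = x \<otimes> x"
proof -
  have "(x \<otimes> h) \<otimes> (x \<otimes> h) = x \<otimes> (h \<otimes> x) \<otimes> h"
    using assms h_carrier by (simp add: m_assoc)
  also have "\<dots> = x \<otimes> x \<otimes> h \<otimes> h"
    using assms h_carrier by (simp add: m_assoc h_central[OF assms, symmetric])
  finally show ?thesis
    using assms mult_h_mult_h by simp
qed

lemma inv_mem_iff_square_mem:
  assumes "x \<in> carrier G"
  shows "inv x \<in> {x, x \<otimes> h} \<longleftrightarrow> x \<otimes> x \<in> {\<one>, h}"
proof -
  have "inv x = x \<longleftrightarrow> x \<otimes> x = \<one>"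
    using assms by (metis inv_equality r_inv)
  moreover have "inv x = x \<otimes> h \<longleftrightarrow> x \<otimes> x = h"
    using assms h_carrier mult_h_mult_h
    by (metis inv_closed inv_equality m_assoc m_closed r_inv r_one)
  ultimately show ?thesis by auto
qed

definition coset_rep :: "'a \<Rightarrow> 'a" where
  "coset_rep x = (SOME y. y \<in> {x, x \<otimes> h})"

lemma coset_rep_mem: "coset_rep x \<in> {x, x \<otimes> h}"
  unfolding coset_rep_def by (rule someI[of _ x]) simp

lemma coset_rep_mult_h: "x \<in> carrier G \<Longrightarrow> coset_rep (x \<otimes> h) = coset_rep x"
  unfolding coset_rep_def using mult_h_mult_h by (simp add: insert_commute)

definition code :: "'a set" where
  "code = {x \<in> carrier G. x \<otimes> x \<in> {\<one>, h} \<or> x = coset_rep x}"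

lemma code_inter_coset:
  assumes "x \<in> carrier G"
  shows "code \<inter> {x, x \<otimes> h} =
    (if x \<otimes> x \<in> {\<one>, h} then {x, x \<otimes> h} else {coset_rep x})"
  unfolding code_def
  using assms h_carrier square_mult_h coset_rep_mult_h coset_rep_mem[of x] by auto

lemma total_perfect_code_code:
  "total_perfect_code (carrier G) (ext_subgroup_sum_adj G {\<one>, h}) code"
  unfolding total_perfect_code_def
proof (intro conjI ballI)
  show "code \<subseteq> carrier G"
    unfolding code_def by auto
  fix v assume v: "v \<in> carrier G"
  let ?u = "inv v"
  have u: "?u \<in> carrier G" using v by simp
  have nbhd: "{c. c \<in> code \<and> ext_subgroup_sum_adj G {\<one>, h} v c} = code \<inter> {?u, ?u \<otimes> h} - {v}"
    using ext_subgroup_sum_adj_iff[OF subgroup_one_h v] l_coset_one_h[OF u] by auto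
  have "\<exists>w. code \<inter> {?u, ?u \<otimes> h} - {v} = {w}"
  proof (cases "v \<otimes> v \<in> {\<one>, h}")
    case True
    then have "{?u, ?u \<otimes> h} = {v, v \<otimes> h}"
      using inv_mem_iff_square_mem[OF v] v mult_h_mult_h by auto
    moreover have "v \<otimes> v \<in> {\<one>, h}" by fact
    ultimately have "code \<inter> {?u, ?u \<otimes> h} - {v} = {v \<otimes> h}"
      using code_inter_coset[OF v] mult_h_neq[OF v] by auto
    then show ?thesis ..
  next
    case False
    have "?u \<otimes> ?u \<notin> {\<one>, h}"
    proof
      assume "?u \<otimes> ?u \<in> {\<one>, h}"
      then have "inv (?u \<otimes> ?u) \<in> {\<one>, h}"
        using subgroup.m_inv_closed[OF subgroup_one_h] by blast
      then show False
        using False v by (simp add: inv_mult_group)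
    qed
    moreover have "v \<notin> {?u, ?u \<otimes> h}"
      using False inv_mem_iff_square_mem[OF v] mult_h_mult_h[OF u] by auto
    ultimately show ?thesis
      using code_inter_coset[OF u] by auto
  qed
  then show "\<exists>!c. c \<in> code \<and> ext_subgroup_sum_adj G {\<one>, h} v c"
    using nbhd by (metis (no_types, lifting) mem_Collect_eq singletonD singletonI)
qed

end

lemma (in group) central_involution_if_normal_card_2:
  assumes normal: "H \<lhd> G" and card: "card H = 2"
  obtains h where "H = {\<one>, h}" and "central_involution G h"
proof -
  have H: "subgroup H G"
    using normal normal_imp_subgroup by blast
  obtain a b where ab: "H = {a, b}" "a \<noteq> b"
    using card by (auto simp: card_2_iff)
  obtain h where Hh: "H = {\<one>, h}" and h1: "h \<noteq> \<one>"
  proof (cases "a = \<one>")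
    case True
    with ab that show thesis by blast
  next
    case False
    with ab subgroup.one_closed[OF H] have "H = {\<one>, a}" by auto
    with False that show thesis by blast
  qed
  have h: "h \<in> carrier G"
    using Hh subgroup.mem_carrier[OF H] by blast
  have "h \<otimes> h \<in> H"
    using Hh subgroup.m_closed[OF H] by blast
  with Hh h h1 have hh: "h \<otimes> h = \<one>"
    by auto
  have "x \<otimes> h = h \<otimes> x" if x: "x \<in> carrier G" for x
  proof -
    have "x \<otimes> h \<otimes> inv x \<in> H"
      using normal.inv_op_closed2[OF normal x] Hh by auto
    moreover have "x \<otimes> h \<otimes> inv x \<noteq> \<one>"
      using x h h1 by (simp add: inv_solve_right')
    ultimately have "x \<otimes> h \<otimes> inv x = h"
      using Hh by auto
    then show ?thesis
      using x h by (simp add: inv_solve_right')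
  qed
  then have "central_involution G h"
    using h h1 hh by (intro central_involution.intro is_group central_involution_axioms.intro)
  with Hh show thesis by (rule that)
qed

theorem theorem6p3:
  fixes G :: "('a, 'b) monoid_scheme" and H :: "'a set"
  assumes "group G" and "finite (carrier G)" and "H \<lhd> G"
  shows "(\<exists>C. total_perfect_code (carrier G) (ext_subgroup_sum_adj G H) C)
           \<longleftrightarrow> even (order G) \<and> card H = 2"
proof -
  interpret group G by fact
  have H: "subgroup H G"
    using assms(3) normal_imp_subgroup by blast
  show ?thesis
  proof
    assume "\<exists>C. total_perfect_code (carrier G) (ext_subgroup_sum_adj G H) C"
    then have "card H = 2"
      using card_eq_2_if_total_perfect_code[OF H] by blast
    with lagrange[OF H] show "even (order G) \<and> card H = 2"
      by (metis dvd_triv_right)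
  next
    assume "even (order G) \<and> card H = 2"
    then obtain h where "H = {one G, h}" and "central_involution G h"
      using central_involution_if_normal_card_2[OF assms(3)] by auto
    then show "\<exists>C. total_perfect_code (carrier G) (ext_subgroup_sum_adj G H) C"
      using central_involution.total_perfect_code_code[of G h] by auto
  qed
qed

end
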